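(* Let $A$ be a bounded convex subset of $\mathbb R^2$ with non-empty interior, let $k,\ell\in\mathbb N$, and assume that the scaled grid problem over $\mathbb Z[i]$ for $A$ and $\sqrt2^{\,k}\sqrt5^{\,\ell}$ has at least two distinct solutions. Then for all $j\ge 0$, the scaled grid problem over $\mathbb Z[i]$ for $A$ and $\sqrt2^{\,k}\sqrt5^{\,\ell+2j}$ has at least $5^j+1$ solutions.
   Context: $\mathbb Z[i]$ is identified with $\mathbb Z^2\subseteq\mathbb R^2$. For a nonzero real $r$, a solution of the scaled grid problem over $\mathbb Z[i]$ for $A$ and $r$ is a point of $(rA)\cap\mathbb Z[i]$, where $rA=\{rv: v\in A\}$. *)

theory Defs
  imports "HOL-Analysis.Analysis"
begin

definition gauss_ints :: "complex set" where
  "gauss_ints = {z. Re z \<in> \<int> \<and> Im z \<in> \<int>}"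

definition grid_solutions :: "complex set \<Rightarrow> real \<Rightarrow> complex set" where
  "grid_solutions A r = ((\<lambda>v. r *\<^sub>R v) ` A) \<inter> gauss_ints"

end

theory Submission
  imports Defs
begin

text \<open>Two distinct solutions p, q for the radius r yield, for the radius N r, the N + 1 lattice
  points N p + t (q - p) with 0 \<le> t \<le> N: they lie on the segment between N p and N q, hence
  in (N r) A by convexity. The radius \<surd>2^k \<surd>5^(l+2j) is 5^j times the original one.
  Boundedness only serves to make the solution sets finite.\<close>

lemma finite_bounded_inter_gauss_ints:
  assumes "bounded S"
  shows "finite (S \<inter> gauss_ints)"
proof -
  obtain B where B: "\<And>z. z \<in> S \<Longrightarrow> norm z \<le> B"
    using assms bounded_iff by blast
  define N where "N = ceiling B"
  have "S \<inter> gauss_ints \<subseteq> (\<lambda>(m, n). Complex (of_int m) (of_int n)) ` ({-N..N} \<times> {-N..N})"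
  proof
    fix z assume z: "z \<in> S \<inter> gauss_ints"
    then obtain m n where m: "Re z = of_int m" and n: "Im z = of_int n"
      unfolding gauss_ints_def by (auto elim!: Ints_cases)
    have "\<bar>Re z\<bar> \<le> B" "\<bar>Im z\<bar> \<le> B"
      using B z abs_Re_le_cmod abs_Im_le_cmod by (meson IntD1 order_trans)+
    hence "\<bar>m\<bar> \<le> N" "\<bar>n\<bar> \<le> N"
      using m n unfolding N_def by (metis ceiling_mono ceiling_of_int of_int_abs)+
    moreover have "z = Complex (of_int m) (of_int n)"
      using m n complex_eq_iff by auto
    ultimately show "z \<in> (\<lambda>(m, n). Complex (of_int m) (of_int n)) ` ({-N..N} \<times> {-N..N})"
      by (auto intro!: image_eqI[where x = "(m, n)"])
  qed
  thus ?thesis by (rule finite_subset) auto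
qed

lemma finite_grid_solutions:
  assumes "bounded A"
  shows "finite (grid_solutions A r)"
  unfolding grid_solutions_def
  by (rule finite_bounded_inter_gauss_ints[OF bounded_scaling[OF assms]])

lemma gauss_ints_lattice_combination:
  assumes "p \<in> gauss_ints" "q \<in> gauss_ints"
  shows "of_nat n * p + of_nat t * (q - p) \<in> gauss_ints"
  using assms unfolding gauss_ints_def by (auto intro!: Ints_add Ints_mult Ints_diff)

lemma scaled_convex_segment_point:
  fixes p q :: "'a :: real_algebra_1"
  assumes "convex A" "p \<in> (\<lambda>v. r *\<^sub>R v) ` A" "q \<in> (\<lambda>v. r *\<^sub>R v) ` A" "t \<le> N"
  shows "of_nat N * p + of_nat t * (q - p) \<in> (\<lambda>v. (real N * r) *\<^sub>R v) ` A"
proof -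
  obtain a b where a: "a \<in> A" "p = r *\<^sub>R a" and b: "b \<in> A" "q = r *\<^sub>R b"
    using assms(2,3) by auto
  define u where "u = real t / real N"
  have u: "0 \<le> u" "u \<le> 1"
    using assms(4) unfolding u_def by (auto simp: divide_le_eq_1)
  have Nu: "real N * u = real t"
    using assms(4) unfolding u_def by auto
  have "(real N * r) *\<^sub>R ((1 - u) *\<^sub>R a + u *\<^sub>R b)
          = real N *\<^sub>R p + (real N * u) *\<^sub>R (q - p)"
    unfolding a(2) b(2) by (simp add: algebra_simps)
  also have "\<dots> = of_nat N * p + of_nat t * (q - p)"
    unfolding Nu by (metis of_real_of_nat_eq scaleR_conv_of_real)
  finally show ?thesis
    by (rule image_eqI[OF sym convexD_alt[OF assms(1) a(1) b(1) u]])
qed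

lemma card_grid_solutions_multiple:
  assumes "bounded A" "convex A"
    and "p \<in> grid_solutions A r" "q \<in> grid_solutions A r" "p \<noteq> q"
  shows "N + 1 \<le> card (grid_solutions A (real N * r))"
proof -
  define f where "f t = of_nat N * p + of_nat t * (q - p)" for t :: nat
  have p: "p \<in> (\<lambda>v. r *\<^sub>R v) ` A" "p \<in> gauss_ints"
    and q: "q \<in> (\<lambda>v. r *\<^sub>R v) ` A" "q \<in> gauss_ints"
    using assms(3,4) unfolding grid_solutions_def by auto
  have sub: "f ` {0..N} \<subseteq> grid_solutions A (real N * r)"
    using scaled_convex_segment_point[OF assms(2) p(1) q(1)]
      gauss_ints_lattice_combination[OF p(2) q(2)]
    unfolding grid_solutions_def f_def by auto
  have inj: "inj_on f {0..N}"
  proof (rule inj_onI)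
    fix x y assume "f x = f y"
    hence "(of_nat x - of_nat y) * (q - p) = 0"
      unfolding f_def by (simp add: algebra_simps)
    thus "x = y" using assms(5) by simp
  qed
  have "N + 1 = card (f ` {0..N})"
    using card_image[OF inj] by simp
  also have "\<dots> \<le> card (grid_solutions A (real N * r))"
    using card_mono[OF finite_grid_solutions[OF assms(1)] sub] .
  finally show ?thesis .
qed

lemma card_ge_2_obtain:
  assumes "2 \<le> card S"
  obtains x y where "x \<in> S" "y \<in> S" "x \<noteq> y"
  using assms card_le_Suc0_iff_eq[of S] by (metis card.infinite not_less_eq_eq numeral_2_eq_2 zero_order(1))

theorem proposition5p19:
  fixes A :: "complex set" and k l :: nat
  assumes "bounded A" and "convex A" and "interior A \<noteq> {}"
    and "card (grid_solutions A (sqrt 2 ^ k * sqrt 5 ^ l)) \<ge> 2"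
  shows "\<forall>j::nat. card (grid_solutions A (sqrt 2 ^ k * sqrt 5 ^ (l + 2 * j))) \<ge> 5 ^ j + 1"
proof
  fix j :: nat
  define r where "r = sqrt 2 ^ k * sqrt 5 ^ l"
  obtain p q where "p \<in> grid_solutions A r" "q \<in> grid_solutions A r" "p \<noteq> q"
    using card_ge_2_obtain assms(4) unfolding r_def by blast
  hence "5 ^ j + 1 \<le> card (grid_solutions A (real (5 ^ j) * r))"
    using card_grid_solutions_multiple assms(1,2) by blast
  moreover have "sqrt 2 ^ k * sqrt 5 ^ (l + 2 * j) = real (5 ^ j) * r"
    unfolding r_def by (simp add: power_add power_mult)
  ultimately show "5 ^ j + 1 \<le> card (grid_solutions A (sqrt 2 ^ k * sqrt 5 ^ (l + 2 * j)))"
    by simp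
qed

end
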